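(* Assume the standing assumptions and fix a function $h$ satisfying (h1)–(h4). Let $\tau=\min\{n\ge1:S_n\le0\}$. Suppose there is a stopping time $\sigma$ (with respect to an admissible filtration) such that $\mathbf P(\sigma>0)>0$, $\mathbf P(S_\sigma\le0)=1$ and $\lim_{x\to\infty}\delta_\sigma(x)=0$. Then $\lim_{x\to\infty}\delta_\tau(x)=0$.
   Context: Standing assumptions: $\{\xi_n\}_{n\ge1}$ are i.i.d. real random variables with common distribution function $F$ and finite mean $\mathbf E\xi_1=-m<0$. $F$ is long-tailed: $\overline F(x)=1-F(x)>0$ for all $x$, and $\overline F(x-c)/\overline F(x)\to1$ as $x\to\infty$ for every fixed $c>0$. Notation: $S_0=0$ and $S_n=\sum_{i=1}^n\xi_i$. Admissible filtration: stopping times are taken with respect to a filtration $\{\mathcal F_n\}_{n\ge0}$ such that $\xi_n$ is $\mathcal F_n$-measurable and $\xi_{n+1}$ is independent of $\mathcal F_n$. The function $h:\mathbb R_+\to\mathbb R_+$ satisfies: - (h1) $h(x)\le x/2$; - (h2) $h(x)\to\infty$; - (h3) $\overline F(x-h(x))/\overline F(x)\to1$ as $x\to\infty$; - (h4) there exists $x_0$ with $h(x+t)\le h(x)+t$ for all $x\ge x_0$, $t\ge0$. For $x\ge0$, let $\mu(x)=\min\{n:S_n>x\}$, with $\min\emptyset=\infty$. For a stopping time $\sigma$, define $$A_{\sigma,2}(x)=\{\mu(x)\le\sigma,\ S_{\mu(x)-1}>h(x)\},\qquad \delta_\sigma(x)=\sup_{y\ge x}\frac{\mathbf P(A_{\sigma,2}(y))}{\overline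 F(y)}.$$ *)

theory Defs
  imports "HOL-Probability.Probability"
begin

text \<open>Random walk S_0 = 0, S_n = xi_1 + ... + xi_n (xi_0 is unused).\<close>
definition rw :: "(nat \<Rightarrow> 'a \<Rightarrow> real) \<Rightarrow> nat \<Rightarrow> 'a \<Rightarrow> real" where
  "rw \<xi> n \<omega> = (\<Sum>i\<in>{1..n}. \<xi> i \<omega>)"

definition distF :: "'a measure \<Rightarrow> (nat \<Rightarrow> 'a \<Rightarrow> real) \<Rightarrow> real \<Rightarrow> real" where
  "distF M \<xi> x = measure M {\<omega> \<in> space M. \<xi> 1 \<omega> \<le> x}"

definition tailF :: "'a measure \<Rightarrow> (nat \<Rightarrow> 'a \<Rightarrow> real) \<Rightarrow> real \<Rightarrow> real" where
  "tailF M \<xi> x = 1 - distF M \<xi> x"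

definition mu :: "(nat \<Rightarrow> 'a \<Rightarrow> real) \<Rightarrow> real \<Rightarrow> 'a \<Rightarrow> enat" where
  "mu \<xi> x \<omega> = (if \<exists>n. rw \<xi> n \<omega> > x then enat (LEAST n. rw \<xi> n \<omega> > x) else \<infinity>)"

definition tau :: "(nat \<Rightarrow> 'a \<Rightarrow> real) \<Rightarrow> 'a \<Rightarrow> enat" where
  "tau \<xi> \<omega> = (if \<exists>n\<ge>1. rw \<xi> n \<omega> \<le> 0 then enat (LEAST n. n \<ge> 1 \<and> rw \<xi> n \<omega> \<le> 0) else \<infinity>)"

definition A2 :: "'a measure \<Rightarrow> (nat \<Rightarrow> 'a \<Rightarrow> real) \<Rightarrow> (real \<Rightarrow> real) \<Rightarrow> ('a \<Rightarrow> enat) \<Rightarrow> real \<Rightarrow> 'a set" where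
  "A2 M \<xi> h \<sigma> x = {\<omega> \<in> space M. \<exists>n. mu \<xi> x \<omega> = enat n \<and> enat n \<le> \<sigma> \<omega> \<and> rw \<xi> (n - 1) \<omega> > h x}"

definition delta :: "'a measure \<Rightarrow> (nat \<Rightarrow> 'a \<Rightarrow> real) \<Rightarrow> (real \<Rightarrow> real) \<Rightarrow> ('a \<Rightarrow> enat) \<Rightarrow> real \<Rightarrow> ereal" where
  "delta M \<xi> h \<sigma> x = (SUP y\<in>{x..}. ereal (measure M (A2 M \<xi> h \<sigma> y) / tailF M \<xi> y))"

definition admissible_filtration :: "'a measure \<Rightarrow> (nat \<Rightarrow> 'a measure) \<Rightarrow> (nat \<Rightarrow> 'a \<Rightarrow> real) \<Rightarrow> bool" where
  "admissible_filtration M F \<xi> \<longleftrightarrow>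
     (\<forall>n. subalgebra M (F n)) \<and>
     (\<forall>n. sets (F n) \<subseteq> sets (F (Suc n))) \<and>
     (\<forall>n\<ge>1. \<xi> n \<in> borel_measurable (F n)) \<and>
     (\<forall>n. \<forall>A\<in>sets (F n). \<forall>B\<in>sets borel.
        measure M (A \<inter> (\<xi> (Suc n) -` B \<inter> space M)) =
        measure M A * measure M (\<xi> (Suc n) -` B \<inter> space M))"

definition stopping_time_wrt :: "'a measure \<Rightarrow> (nat \<Rightarrow> 'a measure) \<Rightarrow> ('a \<Rightarrow> enat) \<Rightarrow> bool" where
  "stopping_time_wrt M F \<sigma> \<longleftrightarrow> (\<forall>n::nat. {\<omega> \<in> space M. \<sigma> \<omega> \<le> enat n} \<in> sets (F n))"

end

theory Submission
  imports Defs
begin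

text \<open>Since \<open>{\<sigma> > 0}\<close> lies in \<open>F 0\<close>, it is independent of every event determined by the walk,
  in particular of \<open>A\<^sub>\<tau>\<^sub>,\<^sub>2(x)\<close>. On \<open>{\<sigma> > 0}\<close> the walk has gone below zero at time \<open>\<sigma> \<ge> 1\<close>,
  so almost surely \<open>\<tau> \<le> \<sigma>\<close> there and \<open>{\<sigma> > 0} \<inter> A\<^sub>\<tau>\<^sub>,\<^sub>2(x) \<subseteq> A\<^sub>\<sigma>\<^sub>,\<^sub>2(x)\<close>. Hence
  \<open>P(\<sigma> > 0) P(A\<^sub>\<tau>\<^sub>,\<^sub>2(x)) \<le> P(A\<^sub>\<sigma>\<^sub>,\<^sub>2(x))\<close>, i.e. \<open>\<delta>\<^sub>\<tau> \<le> \<delta>\<^sub>\<sigma> / P(\<sigma> > 0)\<close>.\<close>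

lemma admissible_filtration_space:
  assumes "admissible_filtration M F \<xi>"
  shows "space (F n) = space M" "sets (F n) \<subseteq> sets M"
  using assms unfolding admissible_filtration_def subalgebra_def by auto

lemma admissible_filtration_mono:
  assumes adm: "admissible_filtration M F \<xi>" and "m \<le> n"
  shows "sets (F m) \<subseteq> sets (F n)"
  using \<open>m \<le> n\<close>
proof (induction n rule: dec_induct)
  case (step n)
  then show ?case using adm unfolding admissible_filtration_def by blast
qed simp

definition walk_cylinder :: "'a measure \<Rightarrow> (nat \<Rightarrow> 'a \<Rightarrow> real) \<Rightarrow> nat \<Rightarrow> (nat \<Rightarrow> real set) \<Rightarrow> 'a set" where
  "walk_cylinder M \<xi> n B = space M \<inter> (\<Inter>k\<in>{1..n}. \<xi> k -` B k)"

definition walk_cylinders :: "'a measure \<Rightarrow> (nat \<Rightarrow> 'a \<Rightarrow> real) \<Rightarrow> 'a set set" where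
  "walk_cylinders M \<xi> = {walk_cylinder M \<xi> n B | n B. \<forall>k. B k \<in> sets borel}"

lemma walk_cylinder_0 [simp]: "walk_cylinder M \<xi> 0 B = space M"
  unfolding walk_cylinder_def by auto

lemma walk_cylinder_Suc:
  "walk_cylinder M \<xi> (Suc n) B = walk_cylinder M \<xi> n B \<inter> (\<xi> (Suc n) -` B (Suc n) \<inter> space M)"
  unfolding walk_cylinder_def by (auto simp: atLeastAtMostSuc_conv)

lemma walk_cylinders_subset_Pow: "walk_cylinders M \<xi> \<subseteq> Pow (space M)"
  unfolding walk_cylinders_def walk_cylinder_def by auto

lemma Int_stable_walk_cylinders: "Int_stable (walk_cylinders M \<xi>)"
proof (rule Int_stableI)
  fix a b assume "a \<in> walk_cylinders M \<xi>" "b \<in> walk_cylinders M \<xi>"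
  then obtain n1 B1 n2 B2 where a: "a = walk_cylinder M \<xi> n1 B1" "\<forall>k. B1 k \<in> sets borel"
    and b: "b = walk_cylinder M \<xi> n2 B2" "\<forall>k. B2 k \<in> sets borel"
    unfolding walk_cylinders_def by blast
  define B where "B k = (if k \<le> n1 then B1 k else UNIV) \<inter> (if k \<le> n2 then B2 k else UNIV)" for k
  have "\<forall>k. B k \<in> sets borel" using a b unfolding B_def by auto
  moreover have "a \<inter> b = walk_cylinder M \<xi> (max n1 n2) B"
    unfolding a b walk_cylinder_def B_def by (auto split: if_splits)
  ultimately show "a \<inter> b \<in> walk_cylinders M \<xi>" unfolding walk_cylinders_def by blast
qed

lemma walk_cylinder_in_filtration:
  assumes adm: "admissible_filtration M F \<xi>" and B: "\<And>k. B k \<in> sets borel"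
  shows "walk_cylinder M \<xi> n B \<in> sets (F n)"
proof (induction n)
  case 0
  show ?case using sets.top[of "F 0"] admissible_filtration_space[OF adm] by simp
next
  case (Suc n)
  have "\<xi> (Suc n) \<in> borel_measurable (F (Suc n))"
    using adm unfolding admissible_filtration_def by auto
  from measurable_sets[OF this B]
  have "\<xi> (Suc n) -` B (Suc n) \<inter> space M \<in> sets (F (Suc n))"
    using admissible_filtration_space[OF adm] by simp
  moreover have "walk_cylinder M \<xi> n B \<in> sets (F (Suc n))"
    using Suc admissible_filtration_mono[OF adm, of n "Suc n"] by auto
  ultimately show ?case unfolding walk_cylinder_Suc by auto
qed

lemma walk_cylinders_subset_events:
  assumes "admissible_filtration M F \<xi>"
  shows "walk_cylinders M \<xi> \<subseteq> sets M"
  unfolding walk_cylinders_def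
  using walk_cylinder_in_filtration[OF assms] admissible_filtration_space[OF assms] by blast

lemma walk_cylinder_indep_filtration_0:
  assumes "prob_space M" and adm: "admissible_filtration M F \<xi>"
    and B: "\<And>k. B k \<in> sets borel" and A: "A \<in> sets (F 0)"
  shows "measure M (A \<inter> walk_cylinder M \<xi> n B) = measure M A * measure M (walk_cylinder M \<xi> n B)"
proof (induction n)
  case 0
  have "A \<subseteq> space M"
    using A sets.sets_into_space admissible_filtration_space[OF adm] by blast
  then show ?case using prob_space.prob_space[OF \<open>prob_space M\<close>] by (simp add: Int_absorb2)
next
  case (Suc n)
  let ?C = "walk_cylinder M \<xi> n B" and ?X = "\<xi> (Suc n) -` B (Suc n) \<inter> space M"
  have indep_step: "measure M (E \<inter> ?X) = measure M E * measure M ?X" if "E \<in> sets (F n)" for E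
    using adm B that unfolding admissible_filtration_def by blast
  have C: "?C \<in> sets (F n)" using walk_cylinder_in_filtration[OF adm B] .
  have "A \<in> sets (F n)" using A admissible_filtration_mono[OF adm, of 0 n] by auto
  with C have "measure M (A \<inter> ?C \<inter> ?X) = measure M (A \<inter> ?C) * measure M ?X"
    by (intro indep_step) auto
  also have "\<dots> = measure M A * (measure M ?C * measure M ?X)"
    using Suc by simp
  also have "measure M ?C * measure M ?X = measure M (?C \<inter> ?X)"
    using indep_step[OF C] by simp
  finally show ?case unfolding walk_cylinder_Suc by (simp add: Int_assoc)
qed

lemma indep_filtration_0_walk_events:
  assumes "prob_space M" and adm: "admissible_filtration M F \<xi>"
    and A: "A \<in> sets (F 0)" and E: "E \<in> sigma_sets (space M) (walk_cylinders M \<xi>)"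
  shows "measure M (A \<inter> E) = measure M A * measure M E"
proof -
  interpret prob_space M by fact
  have "A \<in> events" using A admissible_filtration_space[OF adm] by blast
  then have "indep_set {A} (walk_cylinders M \<xi>)"
    unfolding indep_sets2_eq
    using walk_cylinders_subset_events[OF adm] walk_cylinder_indep_filtration_0[OF \<open>prob_space M\<close> adm _ A]
    by (auto simp: walk_cylinders_def)
  then have "indep_set (sigma_sets (space M) {A}) (sigma_sets (space M) (walk_cylinders M \<xi>))"
    by (rule indep_set_sigma_sets[OF _ _ Int_stable_walk_cylinders]) (auto simp: Int_stable_def)
  from indep_setD[OF this _ E] show ?thesis by (auto intro: sigma_sets.Basic)
qed

lemma xi_measurable_walk_cylinders:
  assumes "k \<ge> 1"
  shows "\<xi> k \<in> borel_measurable (sigma (space M) (walk_cylinders M \<xi>))"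
proof (rule measurableI)
  fix A :: "real set" assume A: "A \<in> sets borel"
  define B where "B j = (if j = k then A else UNIV)" for j
  have "\<forall>j. B j \<in> sets borel" using A unfolding B_def by auto
  then have "walk_cylinder M \<xi> k B \<in> walk_cylinders M \<xi>"
    unfolding walk_cylinders_def by blast
  moreover have "\<xi> k -` A \<inter> space M = walk_cylinder M \<xi> k B"
    using assms unfolding walk_cylinder_def B_def by (auto split: if_splits)
  ultimately show "\<xi> k -` A \<inter> space (sigma (space M) (walk_cylinders M \<xi>))
      \<in> sets (sigma (space M) (walk_cylinders M \<xi>))"
    using walk_cylinders_subset_Pow[of M \<xi>] by (simp add: sigma_sets.Basic)
qed auto

lemma rw_measurable_walk_cylinders:
  "rw \<xi> n \<in> borel_measurable (sigma (space M) (walk_cylinders M \<xi>))"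
  unfolding rw_def[abs_def] by (rule borel_measurable_sum) (auto intro: xi_measurable_walk_cylinders)

lemma mu_eq_enat_iff:
  "mu \<xi> x \<omega> = enat n \<longleftrightarrow> rw \<xi> n \<omega> > x \<and> (\<forall>k<n. rw \<xi> k \<omega> \<le> x)"
proof (cases "\<exists>n. rw \<xi> n \<omega> > x")
  case True
  then have mu: "mu \<xi> x \<omega> = enat (LEAST n. rw \<xi> n \<omega> > x)" unfolding mu_def by simp
  show ?thesis
  proof
    assume "mu \<xi> x \<omega> = enat n"
    then have "n = (LEAST n. rw \<xi> n \<omega> > x)" using mu by simp
    then show "rw \<xi> n \<omega> > x \<and> (\<forall>k<n. rw \<xi> k \<omega> \<le> x)"
      using LeastI_ex[OF True] not_less_Least by (metis not_le)
  next
    assume "rw \<xi> n \<omega> > x \<and> (\<forall>k<n. rw \<xi> k \<omega> \<le> x)"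
    then have "(LEAST n. rw \<xi> n \<omega> > x) = n"
      by (intro Least_equality) (auto simp: not_less[symmetric])
    then show "mu \<xi> x \<omega> = enat n" using mu by simp
  qed
qed (auto simp: mu_def)

lemma enat_le_tau_iff:
  "enat n \<le> tau \<xi> \<omega> \<longleftrightarrow> (\<forall>k. 1 \<le> k \<and> k < n \<longrightarrow> rw \<xi> k \<omega> > 0)"
proof (cases "\<exists>n\<ge>1. rw \<xi> n \<omega> \<le> 0")
  case True
  let ?t = "LEAST n. n \<ge> 1 \<and> rw \<xi> n \<omega> \<le> 0"
  have tau: "tau \<xi> \<omega> = enat ?t" using True unfolding tau_def by simp
  have t: "?t \<ge> 1" "rw \<xi> ?t \<omega> \<le> 0"
    using LeastI_ex[of "\<lambda>n. n \<ge> 1 \<and> rw \<xi> n \<omega> \<le> 0"] True by blast+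
  have least: "?t \<le> k" if "1 \<le> k" "rw \<xi> k \<omega> \<le> 0" for k
    using that by (intro Least_le) auto
  show ?thesis
  proof
    assume "enat n \<le> tau \<xi> \<omega>"
    then have "n \<le> ?t" using tau by simp
    then show "\<forall>k. 1 \<le> k \<and> k < n \<longrightarrow> rw \<xi> k \<omega> > 0"
      using least by (meson leD less_le_trans not_le)
  next
    assume "\<forall>k. 1 \<le> k \<and> k < n \<longrightarrow> rw \<xi> k \<omega> > 0"
    then have "n \<le> ?t" using t by (meson not_le not_less)
    then show "enat n \<le> tau \<xi> \<omega>" using tau by simp
  qed
qed (auto simp: tau_def)

lemma A2_conv:
  "A2 M \<xi> h s x = {\<omega> \<in> space M. \<exists>n. rw \<xi> n \<omega> > x \<and> (\<forall>k\<in>{..<n}. rw \<xi> k \<omega> \<le> x)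
      \<and> enat n \<le> s \<omega> \<and> rw \<xi> (n - 1) \<omega> > h x}"
  unfolding A2_def mu_eq_enat_iff by auto

lemma A2_tau_in_walk_sigma: "A2 M \<xi> h (tau \<xi>) x \<in> sigma_sets (space M) (walk_cylinders M \<xi>)"
proof -
  let ?N = "sigma (space M) (walk_cylinders M \<xi>)"
  note [measurable] = rw_measurable_walk_cylinders
  have "{\<omega> \<in> space ?N. \<exists>n. rw \<xi> n \<omega> > x \<and> (\<forall>k\<in>{..<n}. rw \<xi> k \<omega> \<le> x)
      \<and> (\<forall>k\<in>{1..<n}. rw \<xi> k \<omega> > 0) \<and> rw \<xi> (n - 1) \<omega> > h x} \<in> sets ?N"
    by measurable
  moreover have "A2 M \<xi> h (tau \<xi>) x = {\<omega> \<in> space ?N. \<exists>n. rw \<xi> n \<omega> > x \<and> (\<forall>k\<in>{..<n}. rw \<xi> k \<omega> \<le> x)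
      \<and> (\<forall>k\<in>{1..<n}. rw \<xi> k \<omega> > 0) \<and> rw \<xi> (n - 1) \<omega> > h x}"
    unfolding A2_conv enat_le_tau_iff using walk_cylinders_subset_Pow[of M \<xi>] by auto
  ultimately show ?thesis using walk_cylinders_subset_Pow[of M \<xi>] by simp
qed

lemma A2_stopping_time_in_sets:
  assumes adm: "admissible_filtration M F \<xi>" and stop: "stopping_time_wrt M F s"
  shows "A2 M \<xi> h s x \<in> sets M"
proof -
  have "\<xi> k \<in> borel_measurable M" if "k \<ge> 1" for k
    using adm that measurable_from_subalg unfolding admissible_filtration_def by blast
  then have [measurable]: "rw \<xi> n \<in> borel_measurable M" for n
    unfolding rw_def[abs_def] by (intro borel_measurable_sum) auto
  have [measurable]: "Measurable.pred M (\<lambda>\<omega>. s \<omega> \<le> enat m)" for m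
    using stop admissible_filtration_space(2)[OF adm, of m]
    unfolding stopping_time_wrt_def pred_def by blast
  \<comment> \<open>\<open>{n \<le> s}\<close> is the complement of \<open>{s \<le> n - 1} \<in> F (n - 1)\<close>\<close>
  have enat_le_iff: "enat n \<le> s \<omega> \<longleftrightarrow> n = 0 \<or> \<not> s \<omega> \<le> enat (n - 1)" for n \<omega>
    by (cases n) (auto simp: zero_enat_def[symmetric] Suc_ile_eq not_le)
  have "{\<omega> \<in> space M. \<exists>n. rw \<xi> n \<omega> > x \<and> (\<forall>k\<in>{..<n}. rw \<xi> k \<omega> \<le> x)
      \<and> (n = 0 \<or> \<not> s \<omega> \<le> enat (n - 1)) \<and> rw \<xi> (n - 1) \<omega> > h x} \<in> sets M"
    by measurable
  then show ?thesis unfolding A2_conv enat_le_iff .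
qed

lemma tau_le_of_rw_nonpos:
  assumes "\<sigma> \<omega> = enat n" "n \<ge> 1" "rw \<xi> n \<omega> \<le> 0"
  shows "tau \<xi> \<omega> \<le> \<sigma> \<omega>"
  using assms unfolding tau_def by (auto intro!: Least_le)

lemma measure_A2_tau_le_A2_stopping:
  assumes "prob_space M" and adm: "admissible_filtration M F \<xi>" and stop: "stopping_time_wrt M F \<sigma>"
    and below_zero: "measure M {\<omega> \<in> space M. \<exists>n. \<sigma> \<omega> = enat n \<and> rw \<xi> n \<omega> \<le> 0} = 1"
  shows "measure M {\<omega> \<in> space M. \<sigma> \<omega> > 0} * measure M (A2 M \<xi> h (tau \<xi>) x)
    \<le> measure M (A2 M \<xi> h \<sigma> x)"
proof -
  interpret prob_space M by fact
  define S where "S = {\<omega> \<in> space M. \<sigma> \<omega> > 0}"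
  define G where "G = {\<omega> \<in> space M. \<exists>n. \<sigma> \<omega> = enat n \<and> rw \<xi> n \<omega> \<le> 0}"
  let ?E = "A2 M \<xi> h (tau \<xi>) x" and ?A = "A2 M \<xi> h \<sigma> x"
  have "S = space (F 0) - {\<omega> \<in> space M. \<sigma> \<omega> \<le> enat 0}"
    unfolding S_def admissible_filtration_space[OF adm] by (auto simp: zero_enat_def[symmetric])
  then have S: "S \<in> sets (F 0)"
    using stop unfolding stopping_time_wrt_def by auto
  have "prob G = 1" using below_zero unfolding G_def .
  then have G: "G \<in> events" "prob (space M - G) = 0"
    using measure_notin_sets[of G M] prob_compl[of G] by fastforce+
  have A: "?A \<in> events" using A2_stopping_time_in_sets[OF adm stop] .
  have "S \<inter> ?E \<subseteq> ?A \<union> (space M - G)"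
  proof
    fix \<omega> assume \<omega>: "\<omega> \<in> S \<inter> ?E"
    show "\<omega> \<in> ?A \<union> (space M - G)"
    proof (cases "\<omega> \<in> G")
      case True
      then obtain n where n: "\<sigma> \<omega> = enat n" "rw \<xi> n \<omega> \<le> 0" unfolding G_def by auto
      with \<omega> have "n \<ge> 1" unfolding S_def by (auto simp: zero_enat_def)
      with n have "tau \<xi> \<omega> \<le> \<sigma> \<omega>" by (intro tau_le_of_rw_nonpos)
      then show ?thesis using \<omega> unfolding A2_def by (auto intro: order_trans)
    qed (use \<omega> S_def in auto)
  qed
  then have "prob (S \<inter> ?E) \<le> prob (?A \<union> (space M - G))"
    using A G by (intro finite_measure_mono) auto
  also have "\<dots> \<le> prob ?A"
    using A G measure_subadditive[of ?A M "space M - G"] by auto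
  finally show ?thesis
    using indep_filtration_0_walk_events[OF \<open>prob_space M\<close> adm S A2_tau_in_walk_sigma]
    unfolding S_def by simp
qed

lemma delta_le_cmult:
  assumes tail_pos: "\<And>y. tailF M \<xi> y > 0" and "c \<ge> 0"
    and le: "\<And>y. measure M (A2 M \<xi> h s y) \<le> c * measure M (A2 M \<xi> h s' y)"
  shows "delta M \<xi> h s x \<le> ereal c * delta M \<xi> h s' x"
  unfolding delta_def
proof (rule SUP_least)
  fix y assume y: "y \<in> {x..}"
  let ?q = "\<lambda>s y. measure M (A2 M \<xi> h s y) / tailF M \<xi> y"
  have "?q s y \<le> c * ?q s' y"
    using le[of y] tail_pos[of y] by (simp add: divide_right_mono)
  then have "ereal (?q s y) \<le> ereal c * ereal (?q s' y)" by simp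
  also have "\<dots> \<le> ereal c * (SUP y\<in>{x..}. ereal (?q s' y))"
    using y \<open>c \<ge> 0\<close> by (intro ereal_mult_left_mono SUP_upper) auto
  finally show "ereal (?q s y) \<le> ereal c * (SUP y\<in>{x..}. ereal (?q s' y))" .
qed

lemma delta_nonneg:
  assumes "\<And>y. tailF M \<xi> y > 0"
  shows "0 \<le> delta M \<xi> h s x"
  unfolding delta_def using divide_nonneg_pos[OF measure_nonneg assms]
  by (intro SUP_upper2[of x]) auto

theorem lemma4:
  fixes M :: "'a measure" and \<xi> :: "nat \<Rightarrow> 'a \<Rightarrow> real" and h :: "real \<Rightarrow> real"
    and F :: "nat \<Rightarrow> 'a measure" and \<sigma> :: "'a \<Rightarrow> enat"
  assumes "prob_space M"
    and meas: "\<And>n. \<xi> n \<in> borel_measurable M"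
    and indep: "prob_space.indep_vars M (\<lambda>_. borel) \<xi> {1..}"
    and ident: "\<And>n. n \<ge> 1 \<Longrightarrow> distr M borel (\<xi> n) = distr M borel (\<xi> 1)"
    and integr: "integrable M (\<xi> 1)"
    and neg_mean: "integral\<^sup>L M (\<xi> 1) < 0"
    and tail_pos: "\<And>x. tailF M \<xi> x > 0"
    and long_tailed: "\<And>c. c > 0 \<Longrightarrow> ((\<lambda>x. tailF M \<xi> (x - c) / tailF M \<xi> x) \<longlongrightarrow> 1) at_top"
    and h_nonneg: "\<And>x. x \<ge> 0 \<Longrightarrow> h x \<ge> 0"
    and h1: "\<And>x. x \<ge> 0 \<Longrightarrow> h x \<le> x / 2"
    and h2: "filterlim h at_top at_top"
    and h3: "((\<lambda>x. tailF M \<xi> (x - h x) / tailF M \<xi> x) \<longlongrightarrow> 1) at_top"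
    and h4: "\<exists>x0. \<forall>x\<ge>x0. \<forall>t\<ge>0. h (x + t) \<le> h x + t"
    and adm: "admissible_filtration M F \<xi>"
    and stop: "stopping_time_wrt M F \<sigma>"
    and sigma_pos: "measure M {\<omega> \<in> space M. \<sigma> \<omega> > 0} > 0"
    and sigma_neg: "measure M {\<omega> \<in> space M. \<exists>n. \<sigma> \<omega> = enat n \<and> rw \<xi> n \<omega> \<le> 0} = 1"
    and delta_sigma: "(delta M \<xi> h \<sigma> \<longlongrightarrow> 0) at_top"
  shows "(delta M \<xi> h (tau \<xi>) \<longlongrightarrow> 0) at_top"
proof -
  define p where "p = measure M {\<omega> \<in> space M. \<sigma> \<omega> > 0}"
  have "measure M (A2 M \<xi> h (tau \<xi>) y) \<le> 1 / p * measure M (A2 M \<xi> h \<sigma> y)" for y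
    using measure_A2_tau_le_A2_stopping[OF \<open>prob_space M\<close> adm stop sigma_neg, of h y] sigma_pos
    unfolding p_def by (simp add: field_simps)
  then have upper: "delta M \<xi> h (tau \<xi>) x \<le> ereal (1 / p) * delta M \<xi> h \<sigma> x" for x
    using sigma_pos unfolding p_def by (intro delta_le_cmult tail_pos) auto
  have lim: "((\<lambda>x. ereal (1 / p) * delta M \<xi> h \<sigma> x) \<longlongrightarrow> 0) at_top"
    using tendsto_cmult_ereal[OF _ delta_sigma, of "1 / p"] by simp
  show ?thesis
    by (rule tendsto_sandwich[OF _ _ tendsto_const lim]) (simp_all add: delta_nonneg[OF tail_pos] upper)
qed

end
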